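(* Assume the light-tailed noise condition holds with constants $\bar p,\sigma_0>0$, $\max(\|f_0\|_\infty,\|g_0\|_\infty)\le M_0$, and $\tau\ge c_9=2\max\{4M_0,\sigma_0(\log4)^{1/2}\}$. Then for all measurable $f,g:[0,1]^d\to[-M_0,M_0]$, $$\mathcal R_\tau(f,g)-\mathcal R_\tau(f,g_0)\ge\frac{\alpha^2}4\|g-g_0\|_2^2-\alpha\|g-g_0\|_2\Big(\frac{\bar p}2\|f-f_0\|_4^2+c_{17}e^{-\tau^2/(2\sigma_0^2)}\Big)$$ and $$\mathcal R_\tau(f,g)-\mathcal R_\tau(f,g_0)\le\frac{\alpha^2}2\|g-g_0\|_2^2+\alpha\|g-g_0\|_2\Big(\frac{\bar p}2\|f-f_0\|_4^2+c_{17}e^{-\tau^2/(2\sigma_0^2)}\Big),$$ where $c_{17}=4M_0+2\sigma_0$.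
   Context: $(Y,X)\in\mathbb R\times[0,1]^d$, $X\sim P_X$; $\alpha\in(0,1)$; $f_0$ satisfies $\mathbb P(Y\le f_0(X)\mid X=x)=\alpha$ and $g_0(x)=\alpha^{-1}\mathbb E[Y\mathbb 1\{Y\le f_0(X)\}\mid X=x]$. $\epsilon=Y-f_0(X)$, $\epsilon_-=\min(\epsilon,0)$, $\omega=\epsilon_--\mathbb E(\epsilon_-\mid X)$. Surrogate $Z(f)=\min\{Y-f(X),0\}+\alpha f(X)$. Huber loss $\ell_\tau(u)=\tfrac12u^2\mathbb 1(|u|\le\tau)+(\tau|u|-\tau^2/2)\mathbb 1(|u|>\tau)$ and $\mathcal R_\tau(f,g)=\mathbb E\,\ell_\tau(Z(f)-\alpha g(X))$. $\|h\|_q=(\mathbb E|h(X)|^q)^{1/q}$. Light-tailed noise condition: the conditional density $p_{\epsilon|X}$ exists with $\sup_up_{\epsilon|X}(u)\le\bar p$ a.s., and $\mathbb E[e^{\omega^2/\sigma_0^2}\mid X]\le2$ a.s. *)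

theory Defs
  imports "HOL-Probability.Probability"
begin

definition huber :: "real \<Rightarrow> real \<Rightarrow> real" where
  "huber \<tau> u = (if \<bar>u\<bar> \<le> \<tau> then u\<^sup>2 / 2 else \<tau> * \<bar>u\<bar> - \<tau>\<^sup>2 / 2)"

definition Zsur :: "real \<Rightarrow> ('x \<Rightarrow> real) \<Rightarrow> real \<Rightarrow> 'x \<Rightarrow> real" where
  "Zsur \<alpha> f y x = min (y - f x) 0 + \<alpha> * f x"

text \<open>The joint law of (Y,X) is given by the marginal PX of X and the
  conditional law K x of Y given X = x (a Markov kernel).
  Huber risk R_tau(f,g) = E l_tau(Z(f) - alpha g(X)).\<close>
definition risk :: "'x measure \<Rightarrow> ('x \<Rightarrow> real measure) \<Rightarrow> real \<Rightarrow> real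
    \<Rightarrow> ('x \<Rightarrow> real) \<Rightarrow> ('x \<Rightarrow> real) \<Rightarrow> real" where
  "risk PX K \<alpha> \<tau> f g =
     (\<integral>x. (\<integral>y. huber \<tau> (Zsur \<alpha> f y x - \<alpha> * g x) \<partial>K x) \<partial>PX)"

definition Lq_norm :: "'x measure \<Rightarrow> real \<Rightarrow> ('x \<Rightarrow> real) \<Rightarrow> real" where
  "Lq_norm PX q h = (\<integral>x. \<bar>h x\<bar> powr q \<partial>PX) powr (1 / q)"

definition unit_cube :: "(real ^ 'd) set" where
  "unit_cube = {x. \<forall>i. 0 \<le> x $ i \<and> x $ i \<le> 1}"

end

theory Submission
  imports Defs
begin

text \<open>Conditionally on \<open>X = x\<close>, write \<open>u = Z(f) - \<alpha> g\<^sub>0(x)\<close> and \<open>\<delta> = \<alpha> (g(x) - g\<^sub>0(x))\<close>, so the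
  conditional risk difference is \<open>E[\<ell>(u - \<delta>) - \<ell>(u)]\<close>. The derivative \<open>\<psi> = clip \<tau>\<close> of the Huber
  loss is monotone and 1-Lipschitz, so this equals \<open>-\<delta> E \<psi>(u)\<close> plus a remainder in \<open>[0, \<delta>\<^sup>2/2]\<close>;
  the remainder is exactly \<open>\<delta>\<^sup>2/2\<close> on the event \<open>|u| \<le> \<tau> - |\<delta>|\<close>, which has probability at
  least 1/2 by the sub-Gaussian tail of \<open>\<omega>\<close>. This gives the quadratic terms.

  The linear term is small for two reasons. First, \<open>E[u | X]\<close> is of second order in \<open>f - f\<^sub>0\<close>:
  since \<open>f\<^sub>0\<close> is the \<open>\<alpha>\<close>-quantile the first-order term cancels (Neyman orthogonality), and the
  remainder is controlled by the density bound \<open>pbar\<close>, giving \<open>|E u| \<le> pbar/2 (f - f\<^sub>0)\<^sup>2\<close>. Second,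
  clipping moves the mean by at most \<open>E (|\<omega>| - 3\<tau>/4)\<^sub>+\<close>, which is \<open>O(exp(-\<tau>\<^sup>2/(2\<sigma>\<^sub>0\<^sup>2)))\<close>.
  Integrating over \<open>X\<close> and applying Cauchy-Schwarz to \<open>E |g - g\<^sub>0| (f - f\<^sub>0)\<^sup>2\<close> yields the
  \<open>L\<^sub>2\<close> and \<open>L\<^sub>4\<close> norms.\<close>

text \<open>The derivative of \<^const>\<open>huber\<close> \<open>\<tau>\<close>.\<close>
definition clip :: "real \<Rightarrow> real \<Rightarrow> real" where
  "clip \<tau> u = max (- \<tau>) (min \<tau> u)"

lemma huber_measurable [measurable]:
  assumes [measurable]: "f \<in> borel_measurable M"
  shows "(\<lambda>x. huber \<tau> (f x)) \<in> borel_measurable M"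
  unfolding huber_def by measurable

lemma clip_measurable [measurable]:
  assumes [measurable]: "f \<in> borel_measurable M"
  shows "(\<lambda>x. clip \<tau> (f x)) \<in> borel_measurable M"
  unfolding clip_def by measurable

lemma huber_nonneg:
  assumes "0 \<le> \<tau>" shows "0 \<le> huber \<tau> u"
proof (cases "\<bar>u\<bar> \<le> \<tau>")
  case False
  then have "\<tau> * \<tau> \<le> \<tau> * \<bar>u\<bar>" using assms by (intro mult_left_mono) auto
  moreover have "0 \<le> \<tau> * \<tau>" by simp
  ultimately show ?thesis unfolding huber_def if_not_P[OF \<open>\<not> \<bar>u\<bar> \<le> \<tau>\<close>] power2_eq_square by linarith
qed (simp add: huber_def)

lemma huber_le_abs:
  assumes "0 \<le> \<tau>" shows "huber \<tau> u \<le> \<tau> * \<bar>u\<bar>"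
proof (cases "\<bar>u\<bar> \<le> \<tau>")
  case True
  then have "\<bar>u\<bar> * \<bar>u\<bar> \<le> \<tau> * \<bar>u\<bar>" by (intro mult_right_mono) auto
  moreover have "0 \<le> \<tau> * \<bar>u\<bar>" using assms by simp
  ultimately show ?thesis unfolding huber_def if_P[OF \<open>\<bar>u\<bar> \<le> \<tau>\<close>] power2_eq_square abs_mult_self_eq by linarith
qed (simp add: huber_def)

lemma abs_clip_le: "0 \<le> \<tau> \<Longrightarrow> \<bar>clip \<tau> u\<bar> \<le> \<tau>"
  unfolding clip_def by auto

lemma abs_diff_clip_le: "0 \<le> \<tau> \<Longrightarrow> \<bar>u - clip \<tau> u\<bar> \<le> max 0 (\<bar>u\<bar> - \<tau>)"
  unfolding clip_def by auto

lemma huber_taylor_bounds: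
  assumes "0 < \<tau>"
  shows "0 \<le> huber \<tau> (u - d) - huber \<tau> u + d * clip \<tau> u"
    and "huber \<tau> (u - d) - huber \<tau> u + d * clip \<tau> u \<le> d\<^sup>2 / 2"
proof -
  define v where "v = u - d"
  have d: "d = u - v" by (simp add: v_def)
  have sq: "0 \<le> (v - \<tau>)\<^sup>2" "0 \<le> (v + \<tau>)\<^sup>2" "0 \<le> (u - v)\<^sup>2"
    "0 \<le> (u - v - 2 * \<tau>)\<^sup>2" "0 \<le> (u - v + 2 * \<tau>)\<^sup>2" by auto
  have prod: "u \<le> \<tau> \<Longrightarrow> \<tau> \<le> v \<Longrightarrow> 0 \<le> (\<tau> - u) * (2 * v - u - \<tau>)"
    "-\<tau> \<le> u \<Longrightarrow> v \<le> -\<tau> \<Longrightarrow> 0 \<le> (\<tau> + u) * (u - \<tau> - 2 * v)"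
    "\<tau> \<le> u \<Longrightarrow> v \<le> \<tau> \<Longrightarrow> 0 \<le> (u - \<tau>) * (u + \<tau> - 2 * v)"
    "u \<le> -\<tau> \<Longrightarrow> -\<tau> \<le> v \<Longrightarrow> 0 \<le> (- u - \<tau>) * (- u + \<tau> + 2 * v)"
    "\<tau> \<le> u \<Longrightarrow> 0 \<le> \<tau> * (u - \<tau>)" "u \<le> -\<tau> \<Longrightarrow> 0 \<le> \<tau> * (- u - \<tau>)"
    "v \<le> 0 \<Longrightarrow> 0 \<le> \<tau> * (- v)" "0 \<le> v \<Longrightarrow> 0 \<le> \<tau> * v"
    using assms by (auto intro!: mult_nonneg_nonneg simp: mult_nonneg_nonpos)
  show "0 \<le> huber \<tau> (u - d) - huber \<tau> u + d * clip \<tau> u"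
    and "huber \<tau> (u - d) - huber \<tau> u + d * clip \<tau> u \<le> d\<^sup>2 / 2"
    unfolding d using assms sq prod unfolding huber_def clip_def
    by (auto simp: power2_eq_square field_simps abs_if split: if_splits)
qed

lemma huber_taylor_exact:
  assumes "0 < \<tau>" "\<bar>u\<bar> \<le> \<tau> - \<bar>d\<bar>"
  shows "huber \<tau> (u - d) - huber \<tau> u + d * clip \<tau> u = d\<^sup>2 / 2"
  using assms unfolding huber_def clip_def
  by (auto simp: power2_eq_square field_simps abs_if split: if_splits)

definition psi2_norm_le :: "'a measure \<Rightarrow> ('a \<Rightarrow> real) \<Rightarrow> real \<Rightarrow> bool" where
  "psi2_norm_le M w \<sigma> \<longleftrightarrow> (\<integral>\<^sup>+ y. ennreal (exp ((w y)\<^sup>2 / \<sigma>\<^sup>2)) \<partial>M) \<le> 2"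

lemma psi2_norm_le_integral_bound:
  fixes w \<phi> :: "'a \<Rightarrow> real"
  assumes [measurable]: "w \<in> borel_measurable M" "\<phi> \<in> borel_measurable M"
    and psi2: "psi2_norm_le M w \<sigma>"
    and nonneg: "\<And>y. 0 \<le> \<phi> y" and le: "\<And>y. \<phi> y \<le> A * exp ((w y)\<^sup>2 / \<sigma>\<^sup>2)"
  shows "integrable M \<phi>" and "integral\<^sup>L M \<phi> \<le> 2 * A"
proof -
  have "0 \<le> A * exp ((w y)\<^sup>2 / \<sigma>\<^sup>2)" for y
    using order_trans[OF nonneg le] .
  then have A: "0 \<le> A" by (simp add: zero_le_mult_iff)
  have "(\<integral>\<^sup>+ y. ennreal (\<phi> y) \<partial>M) \<le> (\<integral>\<^sup>+ y. ennreal A * ennreal (exp ((w y)\<^sup>2 / \<sigma>\<^sup>2)) \<partial>M)"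
    using le A by (intro nn_integral_mono) (simp add: ennreal_mult[symmetric] ennreal_leI)
  also have "\<dots> = ennreal A * (\<integral>\<^sup>+ y. ennreal (exp ((w y)\<^sup>2 / \<sigma>\<^sup>2)) \<partial>M)"
    by (rule nn_integral_cmult) measurable
  also have "\<dots> \<le> ennreal (2 * A)"
    using psi2 A unfolding psi2_norm_le_def
    by (metis ennreal_mult' ennreal_numeral mult.commute mult_left_mono zero_le)
  finally have bound: "(\<integral>\<^sup>+ y. ennreal (\<phi> y) \<partial>M) \<le> ennreal (2 * A)" .
  then show int: "integrable M \<phi>"
    using nonneg le_less_trans[OF bound ennreal_less_top] by (intro integrableI_nonneg) auto
  show "integral\<^sup>L M \<phi> \<le> 2 * A"
    using bound A nonneg by (simp add: nn_integral_eq_integral[OF int] ennreal_le_iff)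
qed

context prob_space
begin

lemma psi2_tail_bound:
  assumes [measurable]: "w \<in> borel_measurable M" and "psi2_norm_le M w \<sigma>" "0 < \<sigma>" "0 \<le> t"
  shows "prob {y \<in> space M. t < \<bar>w y\<bar>} \<le> 2 * exp (- t\<^sup>2 / \<sigma>\<^sup>2)"
proof -
  have "indicator {y \<in> space M. t < \<bar>w y\<bar>} y \<le> exp (- t\<^sup>2 / \<sigma>\<^sup>2) * exp ((w y)\<^sup>2 / \<sigma>\<^sup>2)" for y
  proof (cases "t < \<bar>w y\<bar>")
    case True
    then have "t\<^sup>2 \<le> (w y)\<^sup>2"
      using assms(4) by (metis abs_le_square_iff abs_of_nonneg less_imp_le)
    then have "0 \<le> - t\<^sup>2 / \<sigma>\<^sup>2 + (w y)\<^sup>2 / \<sigma>\<^sup>2"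
      by (simp add: divide_right_mono add.commute[of "- _"])
    then show ?thesis by (simp add: indicator_def flip: exp_add)
  qed (simp add: indicator_def)
  from psi2_norm_le_integral_bound(2)[OF _ _ assms(2) _ this]
  show ?thesis by simp
qed

lemma psi2_abs_moment_bound:
  assumes [measurable]: "w \<in> borel_measurable M" and "psi2_norm_le M w \<sigma>" "0 < \<sigma>"
  shows "integrable M (\<lambda>y. \<bar>w y\<bar>)" and "expectation (\<lambda>y. \<bar>w y\<bar>) \<le> 2 * \<sigma>"
proof -
  have "\<bar>w y\<bar> \<le> \<sigma> * exp ((w y)\<^sup>2 / \<sigma>\<^sup>2)" for y
  proof -
    have "0 \<le> (\<bar>w y\<bar> - \<sigma>)\<^sup>2" by simp
    then have "2 * (\<sigma> * \<bar>w y\<bar>) \<le> \<sigma>\<^sup>2 + (w y)\<^sup>2"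
      by (simp add: power2_eq_square algebra_simps)
    moreover have "0 \<le> \<sigma> * \<bar>w y\<bar>" using \<open>0 < \<sigma>\<close> by simp
    ultimately have "\<sigma> * \<bar>w y\<bar> \<le> \<sigma>\<^sup>2 + (w y)\<^sup>2" by linarith
    then have "\<bar>w y\<bar> \<le> (\<sigma>\<^sup>2 + (w y)\<^sup>2) / \<sigma>"
      using \<open>0 < \<sigma>\<close> by (simp add: pos_le_divide_eq mult.commute)
    also have "\<dots> = \<sigma> * (1 + (w y)\<^sup>2 / \<sigma>\<^sup>2)"
      using \<open>0 < \<sigma>\<close> by (simp add: field_simps power2_eq_square)
    also have "\<dots> \<le> \<sigma> * exp ((w y)\<^sup>2 / \<sigma>\<^sup>2)"
      using \<open>0 < \<sigma>\<close> by (intro mult_left_mono exp_ge_add_one_self) auto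
    finally show ?thesis .
  qed
  from psi2_norm_le_integral_bound[OF _ _ assms(2) _ this]
  show "integrable M (\<lambda>y. \<bar>w y\<bar>)" and "expectation (\<lambda>y. \<bar>w y\<bar>) \<le> 2 * \<sigma>"
    by simp_all
qed

lemma psi2_excess_bound:
  assumes [measurable]: "w \<in> borel_measurable M" and "psi2_norm_le M w \<sigma>" "0 < \<sigma>" "0 < t"
  shows "integrable M (\<lambda>y. max 0 (\<bar>w y\<bar> - t))"
    and "expectation (\<lambda>y. max 0 (\<bar>w y\<bar> - t)) \<le> \<sigma>\<^sup>2 / t * exp (- t\<^sup>2 / \<sigma>\<^sup>2)"
proof -
  define A where "A = \<sigma>\<^sup>2 / (2 * t) * exp (- t\<^sup>2 / \<sigma>\<^sup>2)"
  have "max 0 (\<bar>w y\<bar> - t) \<le> A * exp ((w y)\<^sup>2 / \<sigma>\<^sup>2)" for y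
  proof (cases "t < \<bar>w y\<bar>")
    case True
    define x where "x = ((w y)\<^sup>2 - t\<^sup>2) / \<sigma>\<^sup>2"
    have "(\<bar>w y\<bar> - t) * (2 * t) \<le> (\<bar>w y\<bar> - t) * (\<bar>w y\<bar> + t)"
      using True by (intro mult_left_mono) auto
    also have "\<dots> = (w y)\<^sup>2 - t\<^sup>2" by (simp add: power2_eq_square algebra_simps)
    finally have "\<bar>w y\<bar> - t \<le> ((w y)\<^sup>2 - t\<^sup>2) / (2 * t)"
      using assms(4) by (simp add: pos_le_divide_eq)
    also have "\<dots> = \<sigma>\<^sup>2 / (2 * t) * x"
      using assms(3) by (simp add: x_def)
    also have "\<dots> \<le> \<sigma>\<^sup>2 / (2 * t) * exp x"
      using assms(4) exp_ge_add_one_self[of x] by (intro mult_left_mono) (linarith, simp)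
    also have "exp x = exp (- t\<^sup>2 / \<sigma>\<^sup>2) * exp ((w y)\<^sup>2 / \<sigma>\<^sup>2)"
      by (simp add: x_def diff_divide_distrib flip: exp_add)
    finally show ?thesis using True by (simp add: A_def)
  qed (use assms(4) in \<open>simp add: A_def\<close>)
  from psi2_norm_le_integral_bound[OF _ _ assms(2) _ this]
  show "integrable M (\<lambda>y. max 0 (\<bar>w y\<bar> - t))"
    and "expectation (\<lambda>y. max 0 (\<bar>w y\<bar> - t)) \<le> \<sigma>\<^sup>2 / t * exp (- t\<^sup>2 / \<sigma>\<^sup>2)"
    using assms(4) by (simp_all add: A_def)
qed

end

lemma nn_integral_half_tent:
  fixes h :: real
  shows "(\<integral>\<^sup>+ t. ennreal (if 0 \<le> h then (h - t) * indicator {0..h} t else (t - h) * indicator {h..0} t) \<partial>lborel)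
    = ennreal (h\<^sup>2 / 2)"
proof (cases "0 \<le> h")
  case True
  have "(\<integral>\<^sup>+ t. ennreal (h - t) * indicator {0..h} t \<partial>lborel) = ennreal ((h * h - h\<^sup>2 / 2) - (h * 0 - 0\<^sup>2 / 2))"
    by (rule nn_integral_FTC_Icc[where F = "\<lambda>t. h * t - t\<^sup>2 / 2"])
       (auto intro!: derivative_eq_intros simp: True)
  moreover have "ennreal ((h - t) * indicator {0..h} t) = ennreal (h - t) * indicator {0..h} t" for t
    by (simp split: split_indicator)
  ultimately show ?thesis
    using True by (simp add: power2_eq_square)
next
  case False
  have "(\<integral>\<^sup>+ t. ennreal (t - h) * indicator {h..0} t \<partial>lborel) = ennreal ((0\<^sup>2 / 2 - h * 0) - (h\<^sup>2 / 2 - h * h))"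
    by (rule nn_integral_FTC_Icc[where F = "\<lambda>t. t\<^sup>2 / 2 - h * t"])
       (use False in \<open>auto intro!: derivative_eq_intros\<close>)
  moreover have "ennreal ((t - h) * indicator {h..0} t) = ennreal (t - h) * indicator {h..0} t" for t
    by (simp split: split_indicator)
  ultimately show ?thesis
    using False by (simp add: power2_eq_square)
qed

text \<open>\<open>Q\<close> is the remainder of the linearisation of \<open>t \<mapsto> min t 0\<close> at its kink. It is dominated
  by the half tent \<open>\<kappa>\<close> between \<open>0\<close> and \<open>h\<close>, whose integral \<open>h\<^sup>2/2\<close> produces the constant.\<close>
lemma (in prob_space) hinge_shift_expectation_bound:
  fixes e :: "'a \<Rightarrow> real" and p :: "real \<Rightarrow> real" and h pbar :: real
  assumes [measurable]: "e \<in> borel_measurable M" "p \<in> borel_measurable borel"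
    and p_bounds: "\<And>t. 0 \<le> p t \<and> p t \<le> pbar"
    and law: "distr M borel e = density lborel p"
  defines "Q \<equiv> \<lambda>t. min (t - h) 0 - min t 0 + (if t \<le> 0 then h else 0)"
  shows "integrable M (\<lambda>y. Q (e y))" and "\<bar>expectation (\<lambda>y. Q (e y))\<bar> \<le> pbar / 2 * h\<^sup>2"
proof -
  define \<kappa> where "\<kappa> t = (if 0 \<le> h then (h - t) * indicator {0..h} t else (t - h) * indicator {h..0} t)" for t
  have [measurable]: "Q \<in> borel_measurable borel" "\<kappa> \<in> borel_measurable borel"
    unfolding Q_def \<kappa>_def[abs_def] by measurable
  have "\<bar>Q t\<bar> \<le> \<kappa> t" for t
    unfolding Q_def \<kappa>_def by (auto split: split_indicator)
  have "\<bar>Q t\<bar> \<le> 2 * \<bar>h\<bar>" for t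
    unfolding Q_def by auto
  then show int: "integrable M (\<lambda>y. Q (e y))"
    by (intro integrable_const_bound[where B = "2 * \<bar>h\<bar>"]) auto
  have "0 \<le> pbar" using p_bounds[of 0] by linarith
  have "ennreal \<bar>expectation (\<lambda>y. Q (e y))\<bar> \<le> (\<integral>\<^sup>+ y. \<bar>Q (e y)\<bar> \<partial>M)"
    using integral_norm_bound_ennreal[OF int] by simp
  also have "\<dots> = (\<integral>\<^sup>+ t. \<bar>Q t\<bar> \<partial>distr M borel e)"
    by (simp add: nn_integral_distr)
  also have "\<dots> = (\<integral>\<^sup>+ t. ennreal (p t) * \<bar>Q t\<bar> \<partial>lborel)"
    unfolding law by (simp add: nn_integral_density)
  also have "\<dots> \<le> (\<integral>\<^sup>+ t. ennreal pbar * \<kappa> t \<partial>lborel)"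
    using p_bounds \<open>\<And>t. \<bar>Q t\<bar> \<le> \<kappa> t\<close> by (intro nn_integral_mono mult_mono ennreal_leI) auto
  also have "\<dots> = ennreal (pbar / 2 * h\<^sup>2)"
    using \<open>0 \<le> pbar\<close>
    by (simp add: nn_integral_cmult nn_integral_half_tent \<kappa>_def ennreal_mult[symmetric])
  finally show "\<bar>expectation (\<lambda>y. Q (e y))\<bar> \<le> pbar / 2 * h\<^sup>2"
    using \<open>0 \<le> pbar\<close> by (simp add: ennreal_le_iff)
qed

lemma integrable_huber:
  assumes [measurable]: "u \<in> borel_measurable M" and "integrable M u" "0 \<le> \<tau>"
  shows "integrable M (\<lambda>y. huber \<tau> (u y))"
proof (rule Bochner_Integration.integrable_bound)
  show "integrable M (\<lambda>y. \<tau> * \<bar>u y\<bar>)" using assms(2) by simp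
  show "AE y in M. norm (huber \<tau> (u y)) \<le> norm (\<tau> * \<bar>u y\<bar>)"
  proof (rule AE_I2)
    fix y
    show "norm (huber \<tau> (u y)) \<le> norm (\<tau> * \<bar>u y\<bar>)"
      using huber_nonneg[OF \<open>0 \<le> \<tau>\<close>, of "u y"] huber_le_abs[OF \<open>0 \<le> \<tau>\<close>, of "u y"] \<open>0 \<le> \<tau>\<close>
      by simp
  qed
qed simp

lemma (in finite_measure) integrable_clip:
  assumes [measurable]: "u \<in> borel_measurable M" and "0 \<le> \<tau>"
  shows "integrable M (\<lambda>y. clip \<tau> (u y))"
  using abs_clip_le \<open>0 \<le> \<tau>\<close> by (intro integrable_const_bound[where B = \<tau>]) auto

context prob_space
begin

lemma abs_expectation_clip_le:
  assumes [measurable]: "u \<in> borel_measurable M" and "integrable M u" "0 \<le> \<tau>"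
  shows "\<bar>expectation (\<lambda>y. clip \<tau> (u y))\<bar> \<le> \<bar>expectation u\<bar> + expectation (\<lambda>y. max 0 (\<bar>u y\<bar> - \<tau>))"
proof -
  have clip_int: "integrable M (\<lambda>y. clip \<tau> (u y))"
    using assms(1,3) by (rule integrable_clip)
  have excess_int: "integrable M (\<lambda>y. max 0 (\<bar>u y\<bar> - \<tau>))"
  proof (rule Bochner_Integration.integrable_bound)
    show "integrable M (\<lambda>y. \<bar>u y\<bar>)" using assms(2) by simp
    show "AE y in M. norm (max 0 (\<bar>u y\<bar> - \<tau>)) \<le> norm \<bar>u y\<bar>"
      using \<open>0 \<le> \<tau>\<close> by (intro AE_I2) auto
  qed measurable
  have "expectation (\<lambda>y. u y - clip \<tau> (u y)) = expectation u - expectation (\<lambda>y. clip \<tau> (u y))"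
    using assms(2) clip_int by (rule Bochner_Integration.integral_diff)
  then have "\<bar>expectation u - expectation (\<lambda>y. clip \<tau> (u y))\<bar> = \<bar>expectation (\<lambda>y. u y - clip \<tau> (u y))\<bar>"
    by simp
  also have "\<dots> \<le> expectation (\<lambda>y. \<bar>u y - clip \<tau> (u y)\<bar>)"
    by (rule integral_abs_bound)
  also have "\<dots> \<le> expectation (\<lambda>y. max 0 (\<bar>u y\<bar> - \<tau>))"
    using assms(2) clip_int excess_int abs_diff_clip_le[OF \<open>0 \<le> \<tau>\<close>] by (intro integral_mono) auto
  finally show ?thesis by arith
qed

lemma huber_shift_remainder:
  assumes [measurable]: "u \<in> borel_measurable M" and "integrable M u" "0 < \<tau>"
  shows "expectation (\<lambda>y. huber \<tau> (u y - \<delta>)) - expectation (\<lambda>y. huber \<tau> (u y))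
      = expectation (\<lambda>y. huber \<tau> (u y - \<delta>) - huber \<tau> (u y) + \<delta> * clip \<tau> (u y))
        - \<delta> * expectation (\<lambda>y. clip \<tau> (u y))"
proof -
  have "integrable M (\<lambda>y. u y - \<delta>)" using assms(2) by simp
  then show ?thesis
    using assms integrable_huber[of "\<lambda>y. u y - \<delta>"] integrable_huber[of u] integrable_clip[of u]
    by simp
qed

lemma integrable_huber_remainder:
  assumes [measurable]: "u \<in> borel_measurable M" and "integrable M u" "0 \<le> \<tau>"
  shows "integrable M (\<lambda>y. huber \<tau> (u y - \<delta>) - huber \<tau> (u y) + \<delta> * clip \<tau> (u y))"
proof -
  have "integrable M (\<lambda>y. u y - \<delta>)" using assms(2) by simp
  then show ?thesis
    using assms integrable_huber[of "\<lambda>y. u y - \<delta>"] integrable_huber[of u] integrable_clip[of u]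
    by simp
qed

lemma huber_shift_upper:
  assumes [measurable]: "u \<in> borel_measurable M" and "integrable M u" "0 < \<tau>"
  shows "expectation (\<lambda>y. huber \<tau> (u y - \<delta>)) - expectation (\<lambda>y. huber \<tau> (u y))
      \<le> \<delta>\<^sup>2 / 2 - \<delta> * expectation (\<lambda>y. clip \<tau> (u y))"
proof -
  have "expectation (\<lambda>y. huber \<tau> (u y - \<delta>) - huber \<tau> (u y) + \<delta> * clip \<tau> (u y)) \<le> expectation (\<lambda>y. \<delta>\<^sup>2 / 2)"
    using assms huber_taylor_bounds(2)[OF \<open>0 < \<tau>\<close>]
    by (intro integral_mono integrable_huber_remainder) auto
  then show ?thesis using huber_shift_remainder[OF assms] by (simp add: prob_space)
qed

lemma huber_shift_lower:
  assumes [measurable]: "u \<in> borel_measurable M" and "integrable M u" "0 < \<tau>"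
    and tail: "prob {y \<in> space M. \<tau> - \<bar>\<delta>\<bar> < \<bar>u y\<bar>} \<le> q"
  shows "(1 - q) * \<delta>\<^sup>2 / 2 - \<delta> * expectation (\<lambda>y. clip \<tau> (u y))
      \<le> expectation (\<lambda>y. huber \<tau> (u y - \<delta>)) - expectation (\<lambda>y. huber \<tau> (u y))"
proof -
  define T where "T = {y \<in> space M. \<tau> - \<bar>\<delta>\<bar> < \<bar>u y\<bar>}"
  have [measurable]: "T \<in> sets M" unfolding T_def by measurable
  have "integrable M (indicator T :: 'a \<Rightarrow> real)"
    by (simp add: emeasure_eq_measure)
  then have ind_int: "integrable M (\<lambda>y. \<delta>\<^sup>2 / 2 * (1 - indicator T y))"
    by simp
  have "\<delta>\<^sup>2 / 2 * (1 - indicator T y) \<le> huber \<tau> (u y - \<delta>) - huber \<tau> (u y) + \<delta> * clip \<tau> (u y)"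
    if "y \<in> space M" for y
  proof (cases "y \<in> T")
    case True
    then show ?thesis using huber_taylor_bounds(1)[OF \<open>0 < \<tau>\<close>] by simp
  next
    case False
    then have "\<bar>u y\<bar> \<le> \<tau> - \<bar>\<delta>\<bar>" using that by (auto simp: T_def)
    then show ?thesis using False huber_taylor_exact[OF \<open>0 < \<tau>\<close>] by simp
  qed
  then have "expectation (\<lambda>y. \<delta>\<^sup>2 / 2 * (1 - indicator T y))
      \<le> expectation (\<lambda>y. huber \<tau> (u y - \<delta>) - huber \<tau> (u y) + \<delta> * clip \<tau> (u y))"
    using ind_int integrable_huber_remainder[OF assms(1,2) less_imp_le[OF assms(3)]]
    by (rule integral_mono[rotated 2])
  moreover have "expectation (\<lambda>y. \<delta>\<^sup>2 / 2 * (1 - indicator T y)) = \<delta>\<^sup>2 / 2 * (1 - prob T)"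
    using \<open>integrable M (indicator T)\<close> by (simp add: Bochner_Integration.integral_diff prob_space)
  moreover have "\<delta>\<^sup>2 / 2 * (1 - q) \<le> \<delta>\<^sup>2 / 2 * (1 - prob T)"
    using tail by (intro mult_left_mono) (simp_all add: T_def)
  ultimately have "\<delta>\<^sup>2 / 2 * (1 - q)
      \<le> expectation (\<lambda>y. huber \<tau> (u y - \<delta>) - huber \<tau> (u y) + \<delta> * clip \<tau> (u y))"
    by linarith
  moreover have "(1 - q) * \<delta>\<^sup>2 / 2 = \<delta>\<^sup>2 / 2 * (1 - q)" by simp
  ultimately show ?thesis
    unfolding huber_shift_remainder[OF assms(1-3)] by linarith
qed

end

lemma Lq_norm_2: "Lq_norm M 2 h = sqrt (\<integral>x. (h x)\<^sup>2 \<partial>M)"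
proof -
  have "0 \<le> (\<integral>x. (h x)\<^sup>2 \<partial>M)" by (intro integral_nonneg_AE) auto
  then show ?thesis by (simp add: Lq_norm_def powr_half_sqrt)
qed

lemma Lq_norm_4_squared: "(Lq_norm M 4 h)\<^sup>2 = sqrt (\<integral>x. ((h x)\<^sup>2)\<^sup>2 \<partial>M)"
proof -
  have "\<bar>t\<bar> powr 4 = (t\<^sup>2)\<^sup>2" for t :: real
    by (simp add: power_mult[symmetric])
  moreover have "0 \<le> (\<integral>x. ((h x)\<^sup>2)\<^sup>2 \<partial>M)" by (intro integral_nonneg_AE) auto
  ultimately show ?thesis
    by (simp add: Lq_norm_def power2_eq_square powr_add[symmetric] powr_half_sqrt)
qed

lemma integral_abs_mult_le_sqrt:
  fixes a b :: "'a \<Rightarrow> real"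
  assumes [measurable]: "a \<in> borel_measurable M" "b \<in> borel_measurable M"
    and int: "integrable M (\<lambda>x. (a x)\<^sup>2)" "integrable M (\<lambda>x. (b x)\<^sup>2)"
  shows "(\<integral>x. \<bar>a x * b x\<bar> \<partial>M) \<le> sqrt (\<integral>x. (a x)\<^sup>2 \<partial>M) * sqrt (\<integral>x. (b x)\<^sup>2 \<partial>M)"
proof -
  have pointwise: "norm \<bar>a x * b x\<bar> \<le> norm (((a x)\<^sup>2 + (b x)\<^sup>2) / 2)" for x
  proof -
    have "\<bar>a x * b x\<bar> = 2 * \<bar>a x\<bar> * \<bar>b x\<bar> / 2" by (simp add: abs_mult)
    also have "\<dots> \<le> ((a x)\<^sup>2 + (b x)\<^sup>2) / 2"
      using sum_squares_bound[of "\<bar>a x\<bar>" "\<bar>b x\<bar>"] by (intro divide_right_mono) simp_all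
    finally have "\<bar>a x * b x\<bar> \<le> ((a x)\<^sup>2 + (b x)\<^sup>2) / 2" .
    moreover have "0 \<le> ((a x)\<^sup>2 + (b x)\<^sup>2) / 2" by simp
    ultimately show ?thesis by (simp only: real_norm_def abs_abs abs_of_nonneg)
  qed
  have int_ab: "integrable M (\<lambda>x. \<bar>a x * b x\<bar>)"
  proof (rule Bochner_Integration.integrable_bound)
    show "integrable M (\<lambda>x. ((a x)\<^sup>2 + (b x)\<^sup>2) / 2)" using int by simp
    show "AE x in M. norm \<bar>a x * b x\<bar> \<le> norm (((a x)\<^sup>2 + (b x)\<^sup>2) / 2)"
      using pointwise by simp
  qed measurable
  have sq: "(\<integral>\<^sup>+x. ennreal \<bar>f x\<bar> ^ 2 \<partial>M) = ennreal (\<integral>x. (f x)\<^sup>2 \<partial>M)"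
    if [measurable]: "f \<in> borel_measurable M" and "integrable M (\<lambda>x. (f x)\<^sup>2)" for f
  proof -
    have "(\<integral>\<^sup>+x. ennreal \<bar>f x\<bar> ^ 2 \<partial>M) = (\<integral>\<^sup>+x. ennreal ((f x)\<^sup>2) \<partial>M)"
      by (simp add: ennreal_power)
    also have "\<dots> = ennreal (\<integral>x. (f x)\<^sup>2 \<partial>M)"
      using that(2) by (simp add: nn_integral_eq_integral)
    finally show ?thesis .
  qed
  have "ennreal ((\<integral>x. \<bar>a x * b x\<bar> \<partial>M)\<^sup>2) = (\<integral>\<^sup>+x. ennreal \<bar>a x\<bar> * ennreal \<bar>b x\<bar> \<partial>M)\<^sup>2"
    using int_ab by (simp add: nn_integral_eq_integral ennreal_power ennreal_mult[symmetric] abs_mult)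
  also have "\<dots> \<le> (\<integral>\<^sup>+x. ennreal \<bar>a x\<bar> ^ 2 \<partial>M) * (\<integral>\<^sup>+x. ennreal \<bar>b x\<bar> ^ 2 \<partial>M)"
    by (rule Cauchy_Schwarz_nn_integral) measurable
  also have "\<dots> = ennreal ((\<integral>x. (a x)\<^sup>2 \<partial>M) * (\<integral>x. (b x)\<^sup>2 \<partial>M))"
    using int by (simp add: sq ennreal_mult integral_nonneg_AE)
  finally have "(\<integral>x. \<bar>a x * b x\<bar> \<partial>M)\<^sup>2 \<le> (\<integral>x. (a x)\<^sup>2 \<partial>M) * (\<integral>x. (b x)\<^sup>2 \<partial>M)"
    by (simp add: ennreal_le_iff integral_nonneg_AE)
  then show ?thesis
    by (simp add: real_le_rsqrt flip: real_sqrt_mult)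
qed

context prob_space
begin

lemma integral_abs_mult_weight_le:
  fixes d k :: "'a \<Rightarrow> real"
  assumes [measurable]: "d \<in> borel_measurable M" "k \<in> borel_measurable M"
    and bounded: "AE x in M. \<bar>d x\<bar> \<le> C" "AE x in M. \<bar>k x\<bar> \<le> C"
    and "0 \<le> a" "0 \<le> b"
  shows "(\<integral>x. \<bar>d x\<bar> * (a * (k x)\<^sup>2 + b) \<partial>M) \<le> Lq_norm M 2 d * (a * (Lq_norm M 4 k)\<^sup>2 + b)"
proof -
  have sq_bounded: "AE x in M. \<bar>(f x)\<^sup>2\<bar> \<le> B\<^sup>2" if "AE x in M. \<bar>f x\<bar> \<le> B" for f :: "'a \<Rightarrow> real" and B
    using that by eventually_elim (simp add: abs_le_square_iff[symmetric])
  have int_d2: "integrable M (\<lambda>x. (d x)\<^sup>2)"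
    using sq_bounded[OF bounded(1)] by (intro integrable_const_bound[where B = "C\<^sup>2"]) auto
  have int_k4: "integrable M (\<lambda>x. ((k x)\<^sup>2)\<^sup>2)"
    using sq_bounded[OF sq_bounded[OF bounded(2)]]
    by (intro integrable_const_bound[where B = "(C\<^sup>2)\<^sup>2"]) auto
  have "AE x in M. \<bar>\<bar>d x\<bar> * (k x)\<^sup>2\<bar> \<le> C * C\<^sup>2"
    using bounded(1) sq_bounded[OF bounded(2)]
  proof eventually_elim
    case (elim x)
    then show ?case by (auto simp: abs_mult intro!: mult_mono)
  qed
  then have int_dk2: "integrable M (\<lambda>x. \<bar>d x\<bar> * (k x)\<^sup>2)"
    by (intro integrable_const_bound[where B = "C * C\<^sup>2"]) auto
  have int_d: "integrable M (\<lambda>x. \<bar>d x\<bar>)"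
    using bounded(1) by (intro integrable_const_bound[where B = C]) auto
  have cs_k: "(\<integral>x. \<bar>d x\<bar> * (k x)\<^sup>2 \<partial>M) \<le> Lq_norm M 2 d * (Lq_norm M 4 k)\<^sup>2"
    using integral_abs_mult_le_sqrt[of d M "\<lambda>x. (k x)\<^sup>2"] int_d2 int_k4
    by (simp add: Lq_norm_2 Lq_norm_4_squared abs_mult)
  have cs_1: "(\<integral>x. \<bar>d x\<bar> \<partial>M) \<le> Lq_norm M 2 d"
    using integral_abs_mult_le_sqrt[of d M "\<lambda>x. 1"] int_d2 by (simp add: Lq_norm_2 prob_space)
  have "(\<lambda>x. \<bar>d x\<bar> * (a * (k x)\<^sup>2 + b)) = (\<lambda>x. a * (\<bar>d x\<bar> * (k x)\<^sup>2) + b * \<bar>d x\<bar>)"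
    by (auto simp: algebra_simps)
  then have "(\<integral>x. \<bar>d x\<bar> * (a * (k x)\<^sup>2 + b) \<partial>M)
      = a * (\<integral>x. \<bar>d x\<bar> * (k x)\<^sup>2 \<partial>M) + b * (\<integral>x. \<bar>d x\<bar> \<partial>M)"
    using int_dk2 int_d by simp
  also have "\<dots> \<le> a * (Lq_norm M 2 d * (Lq_norm M 4 k)\<^sup>2) + b * Lq_norm M 2 d"
    using cs_k cs_1 \<open>0 \<le> a\<close> \<open>0 \<le> b\<close> by (intro add_mono mult_left_mono)
  also have "\<dots> = Lq_norm M 2 d * (a * (Lq_norm M 4 k)\<^sup>2 + b)"
    by (simp add: algebra_simps)
  finally show ?thesis .
qed

lemma integral_lower_bound_Lq:
  fixes D d k :: "'a \<Rightarrow> real"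
  assumes "integrable M D" and [measurable]: "d \<in> borel_measurable M" "k \<in> borel_measurable M"
    and bounded: "AE x in M. \<bar>d x\<bar> \<le> C" "AE x in M. \<bar>k x\<bar> \<le> C"
    and "0 \<le> s" "0 \<le> a" "0 \<le> b"
    and lower: "AE x in M. c * (d x)\<^sup>2 - s * \<bar>d x\<bar> * (a * (k x)\<^sup>2 + b) \<le> D x"
  shows "c * (Lq_norm M 2 d)\<^sup>2 - s * Lq_norm M 2 d * (a * (Lq_norm M 4 k)\<^sup>2 + b) \<le> integral\<^sup>L M D"
proof -
  have "AE x in M. \<bar>(d x)\<^sup>2\<bar> \<le> C\<^sup>2 \<and> \<bar>\<bar>d x\<bar> * (a * (k x)\<^sup>2 + b)\<bar> \<le> C * (a * C\<^sup>2 + b)"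
    using bounded
  proof eventually_elim
    case (elim x)
    then have "(k x)\<^sup>2 \<le> C\<^sup>2" "(d x)\<^sup>2 \<le> C\<^sup>2" by (simp_all add: abs_le_square_iff[symmetric])
    then have "a * (k x)\<^sup>2 + b \<le> a * C\<^sup>2 + b" using \<open>0 \<le> a\<close> by (simp add: mult_left_mono)
    then show ?case
      using elim \<open>(d x)\<^sup>2 \<le> C\<^sup>2\<close> \<open>0 \<le> a\<close> \<open>0 \<le> b\<close> by (auto simp: abs_mult intro!: mult_mono)
  qed
  then have "AE x in M. \<bar>(d x)\<^sup>2\<bar> \<le> C\<^sup>2" "AE x in M. \<bar>\<bar>d x\<bar> * (a * (k x)\<^sup>2 + b)\<bar> \<le> C * (a * C\<^sup>2 + b)"
    by (auto elim: eventually_mono)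
  then have int: "integrable M (\<lambda>x. (d x)\<^sup>2)" "integrable M (\<lambda>x. \<bar>d x\<bar> * (a * (k x)\<^sup>2 + b))"
    by (intro integrable_const_bound[where B = "C\<^sup>2"] integrable_const_bound[where B = "C * (a * C\<^sup>2 + b)"];
        simp)+
  have "c * (Lq_norm M 2 d)\<^sup>2 - s * (Lq_norm M 2 d * (a * (Lq_norm M 4 k)\<^sup>2 + b))
      \<le> c * (\<integral>x. (d x)\<^sup>2 \<partial>M) - s * (\<integral>x. \<bar>d x\<bar> * (a * (k x)\<^sup>2 + b) \<partial>M)"
    using integral_abs_mult_weight_le[OF assms(2,3) bounded \<open>0 \<le> a\<close> \<open>0 \<le> b\<close>] \<open>0 \<le> s\<close>
    by (simp add: Lq_norm_2 integral_nonneg_AE mult_left_mono)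
  also have "\<dots> = (\<integral>x. c * (d x)\<^sup>2 - s * \<bar>d x\<bar> * (a * (k x)\<^sup>2 + b) \<partial>M)"
    using int by (simp add: mult.assoc)
  also have "\<dots> \<le> integral\<^sup>L M D"
  proof (rule integral_mono_AE[OF _ \<open>integrable M D\<close> lower])
    show "integrable M (\<lambda>x. c * (d x)\<^sup>2 - s * \<bar>d x\<bar> * (a * (k x)\<^sup>2 + b))"
      using int by (simp add: mult.assoc)
  qed
  finally show ?thesis by (simp add: mult.assoc)
qed

lemma integral_diff_bounds_Lq:
  fixes R1 R0 d k :: "'a \<Rightarrow> real"
  assumes "integrable M R1" "integrable M R0"
    and [measurable]: "d \<in> borel_measurable M" "k \<in> borel_measurable M"
    and bounded: "AE x in M. \<bar>d x\<bar> \<le> C" "AE x in M. \<bar>k x\<bar> \<le> C"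
    and "0 \<le> s" "0 \<le> a" "0 \<le> b"
    and lower: "AE x in M. c1 * (d x)\<^sup>2 - s * \<bar>d x\<bar> * (a * (k x)\<^sup>2 + b) \<le> R1 x - R0 x"
    and upper: "AE x in M. R1 x - R0 x \<le> c2 * (d x)\<^sup>2 + s * \<bar>d x\<bar> * (a * (k x)\<^sup>2 + b)"
  shows "c1 * (Lq_norm M 2 d)\<^sup>2 - s * Lq_norm M 2 d * (a * (Lq_norm M 4 k)\<^sup>2 + b)
      \<le> integral\<^sup>L M R1 - integral\<^sup>L M R0"
    and "integral\<^sup>L M R1 - integral\<^sup>L M R0
      \<le> c2 * (Lq_norm M 2 d)\<^sup>2 + s * Lq_norm M 2 d * (a * (Lq_norm M 4 k)\<^sup>2 + b)"
proof -
  have int: "integrable M (\<lambda>x. R1 x - R0 x)" "integrable M (\<lambda>x. - (R1 x - R0 x))"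
    using assms(1,2) by simp_all
  show "c1 * (Lq_norm M 2 d)\<^sup>2 - s * Lq_norm M 2 d * (a * (Lq_norm M 4 k)\<^sup>2 + b)
      \<le> integral\<^sup>L M R1 - integral\<^sup>L M R0"
    using integral_lower_bound_Lq[OF int(1) assms(3-9) lower] assms(1,2) by simp
  have "AE x in M. - c2 * (d x)\<^sup>2 - s * \<bar>d x\<bar> * (a * (k x)\<^sup>2 + b) \<le> - (R1 x - R0 x)"
    using upper by eventually_elim simp
  from integral_lower_bound_Lq[OF int(2) assms(3-9) this] assms(1,2)
  show "integral\<^sup>L M R1 - integral\<^sup>L M R0
      \<le> c2 * (Lq_norm M 2 d)\<^sup>2 + s * Lq_norm M 2 d * (a * (Lq_norm M 4 k)\<^sup>2 + b)"
    by simp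
qed

end

lemma abs_min_shift_le:
  fixes t h :: real
  assumes "0 \<le> \<alpha>" "\<alpha> \<le> 1"
  shows "\<bar>min (t - h) 0 - min t 0 + \<alpha> * h\<bar> \<le> \<bar>h\<bar>"
proof (cases "0 \<le> h")
  case True
  then have "0 \<le> \<alpha> * h" "\<alpha> * h \<le> h" using assms by (auto intro: mult_left_le_one_le)
  then show ?thesis using True by linarith
next
  case False
  then have "\<alpha> * h \<le> 0" "h \<le> \<alpha> * h" using assms by (auto simp: mult_le_0_iff mult_le_cancel_right1)
  then show ?thesis using False by linarith
qed

lemma huber_threshold_bounds:
  fixes M0 \<sigma> \<tau> :: real
  assumes "2 * max (4 * M0) (\<sigma> * sqrt (ln 4)) \<le> \<tau>" "0 < \<sigma>"
  shows "8 * M0 \<le> \<tau>" and "2 * \<sigma> \<le> \<tau>" and "exp (- (\<tau> / 2)\<^sup>2 / \<sigma>\<^sup>2) \<le> 1 / 4"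
proof -
  have "1 \<le> ln (4::real)" by (subst ln_ge_iff) (use exp_le in auto)
  then have sqrt_ln4: "1 \<le> sqrt (ln (4::real))" by simp
  show "8 * M0 \<le> \<tau>" using assms(1) by linarith
  have "\<sigma> \<le> \<sigma> * sqrt (ln 4)" using sqrt_ln4 assms(2) by simp
  then show "2 * \<sigma> \<le> \<tau>" using assms(1) by linarith
  have "(2 * (\<sigma> * sqrt (ln 4)))\<^sup>2 \<le> \<tau>\<^sup>2"
    using assms by (intro power_mono) auto
  then have "ln 4 \<le> (\<tau> / 2)\<^sup>2 / \<sigma>\<^sup>2"
    using assms(2) by (simp add: power_mult_distrib field_simps)
  then have "exp (- (\<tau> / 2)\<^sup>2 / \<sigma>\<^sup>2) \<le> exp (- ln 4)" by simp
  also have "\<dots> = 1 / 4" by (simp add: exp_minus)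
  finally show "exp (- (\<tau> / 2)\<^sup>2 / \<sigma>\<^sup>2) \<le> 1 / 4" .
qed

definition huber_cond_risk :: "real measure \<Rightarrow> real \<Rightarrow> real \<Rightarrow> real \<Rightarrow> real \<Rightarrow> real" where
  "huber_cond_risk \<mu> \<alpha> \<tau> v w = (\<integral>y. huber \<tau> (min (y - v) 0 + \<alpha> * v - \<alpha> * w) \<partial>\<mu>)"

lemma risk_eq_integral_huber_cond_risk:
  "risk PX K \<alpha> \<tau> f g = (\<integral>x. huber_cond_risk (K x) \<alpha> \<tau> (f x) (g x) \<partial>PX)"
  by (simp add: risk_def Zsur_def huber_cond_risk_def)

text \<open>The model conditionally on \<open>X = x\<close>: \<open>\<mu>\<close> is the law of \<open>Y\<close> given \<open>X = x\<close>, \<open>q = f\<^sub>0(x)\<close> and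
  \<open>e = g\<^sub>0(x)\<close>. Below, \<open>residual v\<close> is \<open>Z(f) - \<alpha> g\<^sub>0(x)\<close> when \<open>f(x) = v\<close>, and
  \<open>centred_shortfall\<close> is \<open>\<omega>\<close>.\<close>
locale lower_tail_model = prob_space \<mu> for \<mu> :: "real measure" +
  fixes \<alpha> q e pbar \<sigma> :: real
  assumes sets_eq [measurable_cong]: "sets \<mu> = sets borel"
    and alpha: "0 < \<alpha>" "\<alpha> < 1"
    and quantile: "prob {y. y \<le> q} = \<alpha>"
    and tail_mean: "e = (1 / \<alpha>) * (\<integral>y. y * indicator {y. y \<le> q} y \<partial>\<mu>)"
    and density: "\<exists>p :: real \<Rightarrow> real. p \<in> borel_measurable borel \<and> (\<forall>u. 0 \<le> p u \<and> p u \<le> pbar)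
      \<and> distr \<mu> borel (\<lambda>y. y - q) = density lborel (\<lambda>u. ennreal (p u))"
    and integrable_shortfall: "integrable \<mu> (\<lambda>y. min (y - q) 0)"
    and psi2: "psi2_norm_le \<mu> (\<lambda>y. min (y - q) 0 - expectation (\<lambda>z. min (z - q) 0)) \<sigma>"
    and sigma_pos: "0 < \<sigma>"
begin

definition residual :: "real \<Rightarrow> real \<Rightarrow> real" where
  "residual v y = min (y - v) 0 + \<alpha> * v - \<alpha> * e"

definition centred_shortfall :: "real \<Rightarrow> real" where
  "centred_shortfall y = min (y - q) 0 - expectation (\<lambda>z. min (z - q) 0)"

lemma space_eq: "space \<mu> = UNIV"
  using sets_eq_imp_space_eq[OF sets_eq] by simp

lemma residual_measurable [measurable]: "residual v \<in> borel_measurable \<mu>"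
  unfolding residual_def[abs_def] by measurable

lemma centred_shortfall_measurable [measurable]: "centred_shortfall \<in> borel_measurable \<mu>"
  unfolding centred_shortfall_def[abs_def] by measurable

lemma expectation_shortfall: "expectation (\<lambda>y. min (y - q) 0) = \<alpha> * (e - q)"
proof -
  have ind_int: "integrable \<mu> (\<lambda>y. q * indicator {y. y \<le> q} y)"
    by (simp add: emeasure_eq_measure)
  have "(\<integral>y. y * indicator {y. y \<le> q} y \<partial>\<mu>) = (\<integral>y. min (y - q) 0 + q * indicator {y. y \<le> q} y \<partial>\<mu>)"
    by (rule Bochner_Integration.integral_cong) (auto split: split_indicator)
  also have "\<dots> = expectation (\<lambda>y. min (y - q) 0) + q * \<alpha>"
    using integrable_shortfall ind_int quantile by (simp add: space_eq)
  finally show ?thesis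
    using tail_mean alpha by (simp add: field_simps)
qed

lemma abs_residual_sub_centred_le: "\<bar>residual v y - centred_shortfall y\<bar> \<le> \<bar>v - q\<bar>"
proof -
  have "residual v y - centred_shortfall y = min ((y - q) - (v - q)) 0 - min (y - q) 0 + \<alpha> * (v - q)"
    unfolding residual_def centred_shortfall_def expectation_shortfall by (simp add: algebra_simps)
  then show ?thesis using abs_min_shift_le[of \<alpha> "y - q" "v - q"] alpha by simp
qed

lemma psi2_centred_shortfall: "psi2_norm_le \<mu> centred_shortfall \<sigma>"
  using psi2 by (simp add: centred_shortfall_def[abs_def])

lemma integrable_abs_centred_shortfall: "integrable \<mu> (\<lambda>y. \<bar>centred_shortfall y\<bar>)"
  and expectation_abs_centred_shortfall: "expectation (\<lambda>y. \<bar>centred_shortfall y\<bar>) \<le> 2 * \<sigma>"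
  using psi2_abs_moment_bound[OF centred_shortfall_measurable psi2_centred_shortfall sigma_pos] .

lemma integrable_residual: "integrable \<mu> (residual v)"
proof (rule Bochner_Integration.integrable_bound)
  show "integrable \<mu> (\<lambda>y. \<bar>centred_shortfall y\<bar> + \<bar>v - q\<bar>)"
    using integrable_abs_centred_shortfall by simp
  show "AE y in \<mu>. norm (residual v y) \<le> norm (\<bar>centred_shortfall y\<bar> + \<bar>v - q\<bar>)"
  proof (rule AE_I2)
    fix y
    have "\<bar>residual v y\<bar> \<le> \<bar>centred_shortfall y\<bar> + \<bar>v - q\<bar>"
      using abs_residual_sub_centred_le[of v y] by linarith
    then show "norm (residual v y) \<le> norm (\<bar>centred_shortfall y\<bar> + \<bar>v - q\<bar>)" by simp
  qed
qed simp

text \<open>Neyman orthogonality: the quantile condition cancels the term linear in \<open>v - q\<close>, leaving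
  only the hinge remainder.\<close>
lemma abs_expectation_residual_le: "\<bar>expectation (residual v)\<bar> \<le> pbar / 2 * (v - q)\<^sup>2"
proof -
  obtain p :: "real \<Rightarrow> real" where [measurable]: "p \<in> borel_measurable borel"
    and p_bounds: "\<And>u. 0 \<le> p u \<and> p u \<le> pbar"
    and law: "distr \<mu> borel (\<lambda>y. y - q) = density lborel (\<lambda>u. ennreal (p u))"
    using density by blast
  define h where "h = v - q"
  define Q where "Q t = min (t - h) 0 - min t 0 + (if t \<le> 0 then h else 0)" for t
  have Q_int: "integrable \<mu> (\<lambda>y. Q (y - q))"
    and Q_bound: "\<bar>expectation (\<lambda>y. Q (y - q))\<bar> \<le> pbar / 2 * h\<^sup>2"
    using hinge_shift_expectation_bound[of "\<lambda>y. y - q" p pbar h] p_bounds law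
    by (simp_all add: Q_def)
  have ind_int: "integrable \<mu> (\<lambda>y. h * indicator {y. y \<le> q} y)"
    by (simp add: emeasure_eq_measure)
  have "residual v = (\<lambda>y. Q (y - q) + (min (y - q) 0 - h * indicator {y. y \<le> q} y) + \<alpha> * (v - e))"
    unfolding residual_def Q_def h_def by (auto simp: algebra_simps split: split_indicator)
  then have "expectation (residual v)
      = expectation (\<lambda>y. Q (y - q)) + (expectation (\<lambda>y. min (y - q) 0) - h * \<alpha>) + \<alpha> * (v - e)"
    using Q_int integrable_shortfall ind_int quantile by (simp add: space_eq prob_space[unfolded space_eq])
  also have "\<dots> = expectation (\<lambda>y. Q (y - q))"
    unfolding expectation_shortfall h_def by (simp add: algebra_simps)
  finally show ?thesis using Q_bound by (simp add: h_def)
qed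

lemma abs_expectation_clip_residual_le:
  assumes "0 < t" "t + \<bar>v - q\<bar> \<le> \<tau>"
  shows "\<bar>expectation (\<lambda>y. clip \<tau> (residual v y))\<bar> \<le> pbar / 2 * (v - q)\<^sup>2 + \<sigma>\<^sup>2 / t * exp (- t\<^sup>2 / \<sigma>\<^sup>2)"
proof -
  note excess = psi2_excess_bound[OF centred_shortfall_measurable psi2_centred_shortfall sigma_pos \<open>0 < t\<close>]
  have "max 0 (\<bar>residual v y\<bar> - \<tau>) \<le> max 0 (\<bar>centred_shortfall y\<bar> - t)" for y
    using abs_residual_sub_centred_le[of v y] assms(2) by linarith
  then have "expectation (\<lambda>y. max 0 (\<bar>residual v y\<bar> - \<tau>)) \<le> expectation (\<lambda>y. max 0 (\<bar>centred_shortfall y\<bar> - t))"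
    using excess(1) by (intro integral_mono') auto
  then show ?thesis
    using abs_expectation_clip_le[OF residual_measurable integrable_residual, of \<tau> v]
      abs_expectation_residual_le[of v] excess(2) assms
    by linarith
qed

lemma prob_residual_tail_le:
  assumes "0 \<le> t"
  shows "prob {y. t + \<bar>v - q\<bar> < \<bar>residual v y\<bar>} \<le> 2 * exp (- t\<^sup>2 / \<sigma>\<^sup>2)"
proof -
  have "{y. t + \<bar>v - q\<bar> < \<bar>residual v y\<bar>} \<subseteq> {y \<in> space \<mu>. t < \<bar>centred_shortfall y\<bar>}"
  proof
    fix y assume "y \<in> {y. t + \<bar>v - q\<bar> < \<bar>residual v y\<bar>}"
    then have "t < \<bar>centred_shortfall y\<bar>"
      using abs_residual_sub_centred_le[of v y] by simp
    then show "y \<in> {y \<in> space \<mu>. t < \<bar>centred_shortfall y\<bar>}"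
      by (simp add: space_eq)
  qed
  then have "prob {y. t + \<bar>v - q\<bar> < \<bar>residual v y\<bar>} \<le> prob {y \<in> space \<mu>. t < \<bar>centred_shortfall y\<bar>}"
    by (intro finite_measure_mono) measurable
  also have "\<dots> \<le> 2 * exp (- t\<^sup>2 / \<sigma>\<^sup>2)"
    using psi2_tail_bound[OF centred_shortfall_measurable psi2_centred_shortfall sigma_pos assms] .
  finally show ?thesis .
qed

lemma integrable_huber_residual:
  "0 \<le> \<tau> \<Longrightarrow> integrable \<mu> (\<lambda>y. huber \<tau> (residual v y - d))"
  using integrable_residual[of v] by (intro integrable_huber) auto

lemma expectation_huber_residual_le:
  assumes "0 \<le> \<tau>"
  shows "expectation (\<lambda>y. huber \<tau> (residual v y - d)) \<le> \<tau> * (2 * \<sigma> + \<bar>v - q\<bar> + \<bar>d\<bar>)"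
proof -
  have "huber \<tau> (residual v y - d) \<le> \<tau> * (\<bar>centred_shortfall y\<bar> + \<bar>v - q\<bar> + \<bar>d\<bar>)" for y
  proof -
    have "huber \<tau> (residual v y - d) \<le> \<tau> * \<bar>residual v y - d\<bar>"
      using huber_le_abs[OF assms] .
    also have "\<dots> \<le> \<tau> * (\<bar>centred_shortfall y\<bar> + \<bar>v - q\<bar> + \<bar>d\<bar>)"
      using abs_residual_sub_centred_le[of v y] assms by (intro mult_left_mono) auto
    finally show ?thesis .
  qed
  then have "expectation (\<lambda>y. huber \<tau> (residual v y - d))
      \<le> expectation (\<lambda>y. \<tau> * (\<bar>centred_shortfall y\<bar> + \<bar>v - q\<bar> + \<bar>d\<bar>))"
    using integrable_abs_centred_shortfall assms
    by (intro integral_mono integrable_huber_residual) auto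
  also have "\<dots> = \<tau> * (expectation (\<lambda>y. \<bar>centred_shortfall y\<bar>) + \<bar>v - q\<bar> + \<bar>d\<bar>)"
    using integrable_abs_centred_shortfall by (simp add: prob_space)
  also have "\<dots> \<le> \<tau> * (2 * \<sigma> + \<bar>v - q\<bar> + \<bar>d\<bar>)"
    using expectation_abs_centred_shortfall assms by (intro mult_left_mono) auto
  finally show ?thesis .
qed

lemma huber_risk_difference_bounds:
  assumes bounds: "\<bar>q\<bar> \<le> M0" "\<bar>e\<bar> \<le> M0" "\<bar>v\<bar> \<le> M0" "\<bar>w\<bar> \<le> M0"
    and tau: "2 * max (4 * M0) (\<sigma> * sqrt (ln 4)) \<le> \<tau>"
  defines "\<delta> \<equiv> \<alpha> * (w - e)"
    and "B \<equiv> pbar / 2 * (v - q)\<^sup>2 + (4 * M0 + 2 * \<sigma>) * exp (- \<tau>\<^sup>2 / (2 * \<sigma>\<^sup>2))"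
  shows "\<delta>\<^sup>2 / 4 - \<bar>\<delta>\<bar> * B
      \<le> expectation (\<lambda>y. huber \<tau> (residual v y - \<delta>)) - expectation (\<lambda>y. huber \<tau> (residual v y))"
    and "expectation (\<lambda>y. huber \<tau> (residual v y - \<delta>)) - expectation (\<lambda>y. huber \<tau> (residual v y))
      \<le> \<delta>\<^sup>2 / 2 + \<bar>\<delta>\<bar> * B"
proof -
  note tau' = huber_threshold_bounds[OF tau sigma_pos]
  have "0 \<le> M0" using bounds by linarith
  have "0 < \<tau>" using tau'(2) sigma_pos by linarith
  have h: "\<bar>v - q\<bar> \<le> 2 * M0" using bounds by linarith
  have "\<bar>\<delta>\<bar> \<le> \<bar>w - e\<bar>"
    using alpha by (simp add: \<delta>_def abs_mult mult_left_le_one_le)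
  then have d: "\<bar>\<delta>\<bar> \<le> 2 * M0" using bounds by linarith
  \<comment> \<open>Passing from \<open>residual v\<close> to \<open>\<omega>\<close> costs \<open>|v - q| \<le> \<tau>/4\<close> of the clipping threshold.\<close>
  define t where "t = 3 * \<tau> / 4"
  have "\<sigma>\<^sup>2 / t \<le> 4 * M0 + 2 * \<sigma>"
  proof -
    have "\<sigma>\<^sup>2 / t \<le> 2 * \<sigma>"
      using tau'(2) sigma_pos by (simp add: t_def field_simps power2_eq_square)
    then show ?thesis using \<open>0 \<le> M0\<close> by linarith
  qed
  moreover have "exp (- t\<^sup>2 / \<sigma>\<^sup>2) \<le> exp (- \<tau>\<^sup>2 / (2 * \<sigma>\<^sup>2))"
    using sigma_pos by (simp add: t_def field_simps power2_eq_square)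
  ultimately have "\<sigma>\<^sup>2 / t * exp (- t\<^sup>2 / \<sigma>\<^sup>2) \<le> (4 * M0 + 2 * \<sigma>) * exp (- \<tau>\<^sup>2 / (2 * \<sigma>\<^sup>2))"
    using \<open>0 \<le> M0\<close> sigma_pos by (intro mult_mono) auto
  moreover have "\<bar>expectation (\<lambda>y. clip \<tau> (residual v y))\<bar> \<le> pbar / 2 * (v - q)\<^sup>2 + \<sigma>\<^sup>2 / t * exp (- t\<^sup>2 / \<sigma>\<^sup>2)"
    using \<open>0 < \<tau>\<close> h tau'(1) by (intro abs_expectation_clip_residual_le) (auto simp: t_def)
  ultimately have clip: "\<bar>\<delta> * expectation (\<lambda>y. clip \<tau> (residual v y))\<bar> \<le> \<bar>\<delta>\<bar> * B"
    unfolding B_def abs_mult by (intro mult_left_mono) auto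
  have "{y. \<tau> - \<bar>\<delta>\<bar> < \<bar>residual v y\<bar>} \<subseteq> {y. \<tau> / 2 + \<bar>v - q\<bar> < \<bar>residual v y\<bar>}"
    using h d tau'(1) by auto
  then have "prob {y \<in> space \<mu>. \<tau> - \<bar>\<delta>\<bar> < \<bar>residual v y\<bar>} \<le> prob {y. \<tau> / 2 + \<bar>v - q\<bar> < \<bar>residual v y\<bar>}"
    by (intro finite_measure_mono) (auto simp: space_eq)
  also have "\<dots> \<le> 1 / 2"
    using prob_residual_tail_le[of "\<tau> / 2" v] tau'(3) \<open>0 < \<tau>\<close> by simp
  finally have "(1 - 1 / 2) * \<delta>\<^sup>2 / 2 - \<delta> * expectation (\<lambda>y. clip \<tau> (residual v y))
      \<le> expectation (\<lambda>y. huber \<tau> (residual v y - \<delta>)) - expectation (\<lambda>y. huber \<tau> (residual v y))"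
    by (rule huber_shift_lower[OF residual_measurable integrable_residual \<open>0 < \<tau>\<close>])
  then show "\<delta>\<^sup>2 / 4 - \<bar>\<delta>\<bar> * B
      \<le> expectation (\<lambda>y. huber \<tau> (residual v y - \<delta>)) - expectation (\<lambda>y. huber \<tau> (residual v y))"
    using clip by (simp add: field_simps)
  show "expectation (\<lambda>y. huber \<tau> (residual v y - \<delta>)) - expectation (\<lambda>y. huber \<tau> (residual v y))
      \<le> \<delta>\<^sup>2 / 2 + \<bar>\<delta>\<bar> * B"
    using huber_shift_upper[OF residual_measurable integrable_residual \<open>0 < \<tau>\<close>, of v \<delta>] clip
    by linarith
qed

lemma huber_cond_risk_eq:
  "huber_cond_risk \<mu> \<alpha> \<tau> v w = expectation (\<lambda>y. huber \<tau> (residual v y - \<alpha> * (w - e)))"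
  by (simp add: huber_cond_risk_def residual_def algebra_simps)

lemma huber_cond_risk_bounds:
  assumes bounds: "\<bar>q\<bar> \<le> M0" "\<bar>e\<bar> \<le> M0" "\<bar>v\<bar> \<le> M0" "\<bar>w\<bar> \<le> M0"
    and tau: "2 * max (4 * M0) (\<sigma> * sqrt (ln 4)) \<le> \<tau>"
  defines "B \<equiv> pbar / 2 * (v - q)\<^sup>2 + (4 * M0 + 2 * \<sigma>) * exp (- \<tau>\<^sup>2 / (2 * \<sigma>\<^sup>2))"
  shows "0 \<le> huber_cond_risk \<mu> \<alpha> \<tau> v w" and "huber_cond_risk \<mu> \<alpha> \<tau> v w \<le> \<tau> * (2 * \<sigma> + 4 * M0)"
    and "\<alpha>\<^sup>2 / 4 * (w - e)\<^sup>2 - \<alpha> * \<bar>w - e\<bar> * B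
      \<le> huber_cond_risk \<mu> \<alpha> \<tau> v w - huber_cond_risk \<mu> \<alpha> \<tau> v e"
    and "huber_cond_risk \<mu> \<alpha> \<tau> v w - huber_cond_risk \<mu> \<alpha> \<tau> v e
      \<le> \<alpha>\<^sup>2 / 2 * (w - e)\<^sup>2 + \<alpha> * \<bar>w - e\<bar> * B"
proof -
  have "0 \<le> \<tau>" using huber_threshold_bounds(2)[OF tau sigma_pos] sigma_pos by linarith
  then show "0 \<le> huber_cond_risk \<mu> \<alpha> \<tau> v w"
    unfolding huber_cond_risk_eq by (intro integral_nonneg_AE) (simp add: huber_nonneg)
  have "\<bar>v - q\<bar> + \<bar>\<alpha> * (w - e)\<bar> \<le> 4 * M0"
    using bounds alpha mult_left_le_one_le[of "\<bar>w - e\<bar>" \<alpha>] by (simp add: abs_mult)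
  then have "\<tau> * (2 * \<sigma> + \<bar>v - q\<bar> + \<bar>\<alpha> * (w - e)\<bar>) \<le> \<tau> * (2 * \<sigma> + 4 * M0)"
    using \<open>0 \<le> \<tau>\<close> by (intro mult_left_mono) auto
  then show "huber_cond_risk \<mu> \<alpha> \<tau> v w \<le> \<tau> * (2 * \<sigma> + 4 * M0)"
    unfolding huber_cond_risk_eq using expectation_huber_residual_le[OF \<open>0 \<le> \<tau>\<close>, of v "\<alpha> * (w - e)"]
    by linarith
  have "(\<alpha> * (w - e))\<^sup>2 = \<alpha>\<^sup>2 * (w - e)\<^sup>2" "\<bar>\<alpha> * (w - e)\<bar> = \<alpha> * \<bar>w - e\<bar>"
    using alpha by (simp_all add: power_mult_distrib abs_mult)
  then show "\<alpha>\<^sup>2 / 4 * (w - e)\<^sup>2 - \<alpha> * \<bar>w - e\<bar> * B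
      \<le> huber_cond_risk \<mu> \<alpha> \<tau> v w - huber_cond_risk \<mu> \<alpha> \<tau> v e"
    and "huber_cond_risk \<mu> \<alpha> \<tau> v w - huber_cond_risk \<mu> \<alpha> \<tau> v e
      \<le> \<alpha>\<^sup>2 / 2 * (w - e)\<^sup>2 + \<alpha> * \<bar>w - e\<bar> * B"
    using huber_risk_difference_bounds[OF bounds tau] unfolding huber_cond_risk_eq B_def
    by (simp_all add: mult.assoc)
qed

end

lemma integral_kernel_measurable:
  fixes F :: "'a \<Rightarrow> real \<Rightarrow> real"
  assumes [measurable]: "(\<lambda>(x, y). F x y) \<in> borel_measurable (M \<Otimes>\<^sub>M borel)"
    and L: "L \<in> measurable M (subprob_algebra borel)"
  shows "(\<lambda>x. integral\<^sup>L (L x) (F x)) \<in> borel_measurable M"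
proof -
  note integral_measurable_subprob_algebra[measurable] measurable_distr2[measurable] L[measurable]
  have "(\<lambda>x. integral\<^sup>L (distr (L x) (M \<Otimes>\<^sub>M borel) (\<lambda>y. (x, y))) (\<lambda>(x, y). F x y)) \<in> borel_measurable M"
    by measurable
  then show ?thesis
    by (rule measurable_cong[THEN iffD1, rotated]) (simp add: integral_distr subprob_measurableD[OF L])
qed

lemma (in prob_space) integrable_huber_cond_risk:
  assumes K_kernel: "K \<in> measurable M (prob_algebra borel)"
    and [measurable]: "v \<in> borel_measurable M" "w \<in> borel_measurable M"
    and bounded: "AE x in M. \<bar>huber_cond_risk (K x) \<alpha> \<tau> (v x) (w x)\<bar> \<le> C"
  shows "integrable M (\<lambda>x. huber_cond_risk (K x) \<alpha> \<tau> (v x) (w x))"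
proof (rule integrable_const_bound[where B = C])
  show "AE x in M. norm (huber_cond_risk (K x) \<alpha> \<tau> (v x) (w x)) \<le> C" using bounded by simp
  have "K \<in> M \<rightarrow>\<^sub>M subprob_algebra borel"
    using K_kernel by (rule measurable_prob_algebraD)
  then show "(\<lambda>x. huber_cond_risk (K x) \<alpha> \<tau> (v x) (w x)) \<in> borel_measurable M"
    unfolding huber_cond_risk_def by (rule integral_kernel_measurable[rotated]) measurable
qed

lemma AE_lower_tail_model:
  fixes PX :: "'a measure" and K :: "'a \<Rightarrow> real measure" and f0 g0 :: "'a \<Rightarrow> real"
  assumes K_kernel: "K \<in> measurable PX (prob_algebra borel)"
    and alpha: "0 < \<alpha>" "\<alpha> < 1" and sigma_pos: "0 < \<sigma>0"
    and "AE x in PX. measure (K x) {y. y \<le> f0 x} = \<alpha>"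
    and "AE x in PX. g0 x = (1 / \<alpha>) * (\<integral>y. y * indicator {y. y \<le> f0 x} y \<partial>K x)"
    and "AE x in PX. \<exists>p :: real \<Rightarrow> real. p \<in> borel_measurable borel
                    \<and> (\<forall>u. 0 \<le> p u \<and> p u \<le> pbar)
                    \<and> distr (K x) borel (\<lambda>y. y - f0 x) = density lborel (\<lambda>u. ennreal (p u))"
    and "AE x in PX. integrable (K x) (\<lambda>y. min (y - f0 x) 0)"
    and "AE x in PX.
          (\<integral>\<^sup>+ y. ennreal (exp ((min (y - f0 x) 0 - (\<integral>z. min (z - f0 x) 0 \<partial>K x))\<^sup>2 / \<sigma>0\<^sup>2)) \<partial>K x) \<le> 2"
  shows "AE x in PX. lower_tail_model (K x) \<alpha> (f0 x) (g0 x) pbar \<sigma>0"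
  using AE_space assms(5-9)
proof eventually_elim
  case (elim x)
  then have "K x \<in> space (prob_algebra borel)" using measurable_space[OF K_kernel] by simp
  then have "prob_space (K x)" "sets (K x) = sets borel" by (simp_all add: space_prob_algebra)
  with elim show "lower_tail_model (K x) \<alpha> (f0 x) (g0 x) pbar \<sigma>0"
    using alpha sigma_pos by (simp add: lower_tail_model_def lower_tail_model_axioms_def psi2_norm_le_def)
qed

theorem lemmaA4:
  fixes PX :: "(real ^ 'd) measure"
    and K :: "real ^ 'd \<Rightarrow> real measure"
    and f0 g0 f g :: "real ^ 'd \<Rightarrow> real"
    and \<alpha> pbar \<sigma>0 M0 \<tau> :: real
  assumes PX_prob: "prob_space PX"
    and PX_sets: "sets PX = sets borel"
    and PX_cube: "AE x in PX. x \<in> unit_cube"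
    and K_kernel: "K \<in> measurable PX (prob_algebra borel)"
    and alpha: "0 < \<alpha>" "\<alpha> < 1"
    and f0_meas: "f0 \<in> borel_measurable borel"
    and g0_meas: "g0 \<in> borel_measurable borel"
    and f0_quantile: "AE x in PX. measure (K x) {y. y \<le> f0 x} = \<alpha>"
    and g0_def: "AE x in PX. g0 x = (1 / \<alpha>) * (\<integral>y. y * indicator {y. y \<le> f0 x} y \<partial>K x)"
    and pbar_pos: "0 < pbar"
    and sigma_pos: "0 < \<sigma>0"
    and density: "AE x in PX. \<exists>p :: real \<Rightarrow> real. p \<in> borel_measurable borel
                    \<and> (\<forall>u. 0 \<le> p u \<and> p u \<le> pbar)
                    \<and> distr (K x) borel (\<lambda>y. y - f0 x) = density lborel (\<lambda>u. ennreal (p u))"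
    and eps_minus_int: "AE x in PX. integrable (K x) (\<lambda>y. min (y - f0 x) 0)"
    and subgauss: "AE x in PX.
          (\<integral>\<^sup>+ y. ennreal (exp ((min (y - f0 x) 0 - (\<integral>z. min (z - f0 x) 0 \<partial>K x))\<^sup>2 / \<sigma>0\<^sup>2)) \<partial>K x) \<le> 2"
    and f0_bdd: "\<forall>x\<in>unit_cube. \<bar>f0 x\<bar> \<le> M0"
    and g0_bdd: "\<forall>x\<in>unit_cube. \<bar>g0 x\<bar> \<le> M0"
    and tau: "\<tau> \<ge> 2 * max (4 * M0) (\<sigma>0 * sqrt (ln 4))"
    and f_meas: "f \<in> borel_measurable borel"
    and g_meas: "g \<in> borel_measurable borel"
    and f_bdd: "\<forall>x\<in>unit_cube. \<bar>f x\<bar> \<le> M0"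
    and g_bdd: "\<forall>x\<in>unit_cube. \<bar>g x\<bar> \<le> M0"
  shows "(risk PX K \<alpha> \<tau> f g - risk PX K \<alpha> \<tau> f g0
           \<ge> \<alpha>\<^sup>2 / 4 * (Lq_norm PX 2 (\<lambda>x. g x - g0 x))\<^sup>2
             - \<alpha> * Lq_norm PX 2 (\<lambda>x. g x - g0 x)
               * (pbar / 2 * (Lq_norm PX 4 (\<lambda>x. f x - f0 x))\<^sup>2
                  + (4 * M0 + 2 * \<sigma>0) * exp (- \<tau>\<^sup>2 / (2 * \<sigma>0\<^sup>2))))
         \<and> (risk PX K \<alpha> \<tau> f g - risk PX K \<alpha> \<tau> f g0
           \<le> \<alpha>\<^sup>2 / 2 * (Lq_norm PX 2 (\<lambda>x. g x - g0 x))\<^sup>2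
             + \<alpha> * Lq_norm PX 2 (\<lambda>x. g x - g0 x)
               * (pbar / 2 * (Lq_norm PX 4 (\<lambda>x. f x - f0 x))\<^sup>2
                  + (4 * M0 + 2 * \<sigma>0) * exp (- \<tau>\<^sup>2 / (2 * \<sigma>0\<^sup>2))))"
proof -
  interpret PX: prob_space PX by (rule PX_prob)
  note [measurable] = f0_meas g0_meas f_meas g_meas and [measurable_cong] = PX_sets
  have "(0 :: real ^ 'd) \<in> unit_cube" by (simp add: unit_cube_def)
  then have "0 \<le> M0" using f0_bdd by (meson abs_ge_zero order_trans)
  define Ce where "Ce = (4 * M0 + 2 * \<sigma>0) * exp (- \<tau>\<^sup>2 / (2 * \<sigma>0\<^sup>2))"
  define R where "R w x = huber_cond_risk (K x) \<alpha> \<tau> (f x) (w x)" for w x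
  have model: "AE x in PX. lower_tail_model (K x) \<alpha> (f0 x) (g0 x) pbar \<sigma>0
      \<and> \<bar>f0 x\<bar> \<le> M0 \<and> \<bar>g0 x\<bar> \<le> M0 \<and> \<bar>f x\<bar> \<le> M0 \<and> \<bar>g x\<bar> \<le> M0"
    using AE_lower_tail_model[OF K_kernel alpha sigma_pos f0_quantile g0_def density eps_minus_int subgauss]
      PX_cube by eventually_elim (use f0_bdd g0_bdd f_bdd g_bdd in auto)
  have pointwise: "\<bar>R g x\<bar> \<le> \<tau> * (2 * \<sigma>0 + 4 * M0)" "\<bar>R g0 x\<bar> \<le> \<tau> * (2 * \<sigma>0 + 4 * M0)"
    "\<bar>g x - g0 x\<bar> \<le> 2 * M0" "\<bar>f x - f0 x\<bar> \<le> 2 * M0"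
    "\<alpha>\<^sup>2 / 4 * (g x - g0 x)\<^sup>2 - \<alpha> * \<bar>g x - g0 x\<bar> * (pbar / 2 * (f x - f0 x)\<^sup>2 + Ce) \<le> R g x - R g0 x"
    "R g x - R g0 x \<le> \<alpha>\<^sup>2 / 2 * (g x - g0 x)\<^sup>2 + \<alpha> * \<bar>g x - g0 x\<bar> * (pbar / 2 * (f x - f0 x)\<^sup>2 + Ce)"
    if "lower_tail_model (K x) \<alpha> (f0 x) (g0 x) pbar \<sigma>0
      \<and> \<bar>f0 x\<bar> \<le> M0 \<and> \<bar>g0 x\<bar> \<le> M0 \<and> \<bar>f x\<bar> \<le> M0 \<and> \<bar>g x\<bar> \<le> M0" for x
    using that tau lower_tail_model.huber_cond_risk_bounds[of "K x" \<alpha> "f0 x" "g0 x" pbar \<sigma>0 M0 "f x" "g x" \<tau>]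
      lower_tail_model.huber_cond_risk_bounds(1,2)[of "K x" \<alpha> "f0 x" "g0 x" pbar \<sigma>0 M0 "f x" "g0 x" \<tau>]
    unfolding R_def Ce_def by auto
  note AE = eventually_mono[OF model pointwise(1)] eventually_mono[OF model pointwise(2)]
    eventually_mono[OF model pointwise(3)] eventually_mono[OF model pointwise(4)]
    eventually_mono[OF model pointwise(5)] eventually_mono[OF model pointwise(6)]
  have "integrable PX (R g)" "integrable PX (R g0)"
    using PX.integrable_huber_cond_risk[OF K_kernel _ _ AE(1)[unfolded R_def]]
      PX.integrable_huber_cond_risk[OF K_kernel _ _ AE(2)[unfolded R_def]]
    by (simp_all add: R_def[abs_def])
  moreover have "0 \<le> pbar / 2" "0 \<le> Ce" using pbar_pos \<open>0 \<le> M0\<close> sigma_pos by (auto simp: Ce_def)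
  ultimately show ?thesis
    unfolding risk_eq_integral_huber_cond_risk R_def[symmetric] Ce_def[symmetric]
    using PX.integral_diff_bounds_Lq[OF _ _ _ _ AE(3,4) _ _ _ AE(5,6)] alpha by auto
qed

end
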